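(* Let $G$ be an infinite group and let $\mu$ be a (not necessarily symmetric) finitely supported generating probability measure on $G$. Then the Laplacian $\Delta_\mu:\mathbb{R}^G\to\mathbb{R}^G$ is surjective.
   Context: $\mu$ is generating if the semigroup generated by $\operatorname{supp}\mu$ is $G$. The Laplacian is defined by $\Delta_\mu f(x)=f(x)-\sum_{s\in\operatorname{supp}\mu}\mu(s)f(xs)$ for $f:G\to\mathbb{R}$. *)

theory Defs
  imports Complex_Main
begin

text \<open>Groups are modelled by the type class group_add (not necessarily
commutative); the group operation is written +.\<close>

definition supp_meas :: "('a \<Rightarrow> real) \<Rightarrow> 'a set" where
  "supp_meas \<mu> = {s. \<mu> s \<noteq> 0}"

definition finitely_supported_prob :: "('a \<Rightarrow> real) \<Rightarrow> bool" where
  "finitely_supported_prob \<mu> \<longleftrightarrow>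
     (\<forall>s. \<mu> s \<ge> 0) \<and> finite (supp_meas \<mu>) \<and> (\<Sum>s\<in>supp_meas \<mu>. \<mu> s) = 1"

inductive_set generated_semigroup :: "'a::plus set \<Rightarrow> 'a set" for S :: "'a set" where
  gen_base: "s \<in> S \<Longrightarrow> s \<in> generated_semigroup S"
| gen_step: "a \<in> generated_semigroup S \<Longrightarrow> b \<in> generated_semigroup S \<Longrightarrow> a + b \<in> generated_semigroup S"

definition generating :: "('a::plus \<Rightarrow> real) \<Rightarrow> bool" where
  "generating \<mu> \<longleftrightarrow> generated_semigroup (supp_meas \<mu>) = UNIV"

definition laplacian :: "('a::plus \<Rightarrow> real) \<Rightarrow> ('a \<Rightarrow> real) \<Rightarrow> 'a \<Rightarrow> real" where
  "laplacian \<mu> f x = f x - (\<Sum>s\<in>supp_meas \<mu>. \<mu> s * f (x + s))"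

end

theory Submission
  imports Defs "HOL-Library.Function_Algebras" "HOL-Library.Indicator_Function"
begin

text \<open>The Laplacian is the transpose of the operator \<open>h \<mapsto> h - \<check>\<mu> * h\<close> on finitely supported
functions, where \<open>(\<check>\<mu> * h) y = \<Sum>\<^sub>s \<mu> s h (y - s)\<close>. That operator is injective: a finitely supported
function with \<open>h = \<check>\<mu> * h\<close> attains its maximum, the strong maximum principle spreads the maximum
along the semigroup generated by the support, i.e. over all of the group, and an infinite group
forces the constant to be 0. Hence the rows of the Laplacian are linearly independent, so given
\<open>g\<close>, the values \<open>g x\<close> on the rows extend to a linear functional \<open>\<phi>\<close> on \<open>\<real>\<^sup>G\<close>, and
\<open>f y = \<phi> (indicator {y})\<close> solves \<open>laplacian \<mu> f = g\<close>.\<close>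

lemma harmonic_max_spreads:
  fixes \<mu> :: "'a::group_add \<Rightarrow> real"
  assumes "finitely_supported_prob \<mu>" and "generating \<mu>"
    and harmonic: "\<And>y. h y = (\<Sum>s\<in>supp_meas \<mu>. \<mu> s * h (y - s))"
    and max: "\<And>y. h y \<le> h y0"
  shows "h z = h y0"
proof -
  define S where "S = supp_meas \<mu>"
  define M where "M = h y0"
  have finite_S: "finite S" and sum_S: "(\<Sum>s\<in>S. \<mu> s) = 1" and pos_S: "\<And>s. s \<in> S \<Longrightarrow> \<mu> s > 0"
    using assms(1) by (auto simp: finitely_supported_prob_def S_def supp_meas_def order_le_less)
  have step: "h (y - s) = M" if "h y = M" "s \<in> S" for y s
  proof (rule ccontr)
    assume "h (y - s) \<noteq> M"
    then have "h (y - s) < M" using max[of "y - s"] by (auto simp: M_def)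
    then have "(\<Sum>t\<in>S. \<mu> t * h (y - t)) < (\<Sum>t\<in>S. \<mu> t * M)"
      using finite_S \<open>s \<in> S\<close> pos_S max
      by (intro sum_strict_mono_ex1) (auto simp: M_def intro: mult_left_mono less_imp_le)
    also have "\<dots> = M" using sum_S by (simp add: sum_distrib_right[symmetric])
    finally show False using harmonic[of y] that(1) by (simp add: S_def)
  qed
  have "h (y - a) = M" if "a \<in> generated_semigroup S" "h y = M" for a y
    using that
  proof (induction a arbitrary: y rule: generated_semigroup.induct)
    case (gen_base s)
    then show ?case by (rule step[rotated])
  next
    case (gen_step a b)
    have "y - (a + b) = (y - b) - a"
      unfolding diff_conv_add_uminus minus_add add.assoc ..
    then show ?case using gen_step by simp
  qed
  moreover have "-z + y0 \<in> generated_semigroup S"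
    using assms(2) by (simp add: generating_def S_def)
  moreover have "y0 - (-z + y0) = z"
    by (simp add: diff_conv_add_uminus minus_add add.assoc)
  ultimately show ?thesis by (metis M_def)
qed

lemma finite_support_imp_finite_range:
  assumes "finite {y. h y \<noteq> 0}"
  shows "finite (range h)"
proof (rule finite_subset)
  show "range h \<subseteq> insert 0 (h ` {y. h y \<noteq> 0})" by auto
qed (use assms in simp)

lemma harmonic_finite_support_eq_0:
  fixes \<mu> :: "'a::group_add \<Rightarrow> real"
  assumes "infinite (UNIV :: 'a set)" and "finitely_supported_prob \<mu>" and "generating \<mu>"
    and finite_support: "finite {y. h y \<noteq> 0}"
    and harmonic: "\<And>y. h y = (\<Sum>s\<in>supp_meas \<mu>. \<mu> s * h (y - s))"
  shows "h z = 0"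
proof -
  have "finite (range h)" by (rule finite_support_imp_finite_range[OF finite_support])
  then obtain y0 where "h y0 = Max (range h)"
    using Max_in[of "range h"] by (metis UNIV_not_empty image_iff image_is_empty)
  with \<open>finite (range h)\<close> have max: "\<And>y. h y \<le> h y0"
    by simp
  have const: "\<And>y. h y = h y0"
    using harmonic_max_spreads[OF assms(2,3) harmonic max] .
  obtain y1 where "h y1 = 0"
    using ex_new_if_finite[OF assms(1) finite_support] by blast
  then show ?thesis using const by metis
qed

lemma sum_fun_apply: "(\<Sum>i\<in>A. F i) y = (\<Sum>i\<in>A. F i y)"
  for F :: "'i \<Rightarrow> 'a \<Rightarrow> 'b::comm_monoid_add"
  by (induction A rule: infinite_finite_induct) auto

definition fun_scale :: "real \<Rightarrow> ('a \<Rightarrow> real) \<Rightarrow> 'a \<Rightarrow> real" where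
  "fun_scale c f = (\<lambda>y. c * f y)"

lemma vector_space_fun_scale: "vector_space fun_scale"
  by unfold_locales (auto simp: fun_scale_def fun_eq_iff algebra_simps)

text \<open>\<open>laplacian \<mu> f x\<close> is the pairing \<open>\<Sum>\<^sub>y laplacian_row \<mu> x y * f y\<close>.\<close>

definition laplacian_row :: "('a::plus \<Rightarrow> real) \<Rightarrow> 'a \<Rightarrow> 'a \<Rightarrow> real" where
  "laplacian_row \<mu> x = indicator {x} - (\<Sum>s\<in>supp_meas \<mu>. fun_scale (\<mu> s) (indicator {x + s}))"

lemma sum_scaled_laplacian_rows_apply:
  fixes \<mu> :: "'a::group_add \<Rightarrow> real"
  assumes "finite (supp_meas \<mu>)" and "finite T" and zero_outside: "\<And>x. x \<notin> T \<Longrightarrow> h x = 0"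
  shows "(\<Sum>x\<in>T. fun_scale (h x) (laplacian_row \<mu> x)) y
           = h y - (\<Sum>s\<in>supp_meas \<mu>. \<mu> s * h (y - s))"
proof -
  define S where "S = supp_meas \<mu>"
  have summand: "fun_scale (h x) (laplacian_row \<mu> x) y
      = (if x = y then h x else 0) - (\<Sum>s\<in>S. \<mu> s * (if x = y - s then h x else 0))" for x
    by (auto simp: fun_scale_def laplacian_row_def S_def sum_fun_apply indicator_def
        sum_distrib_left right_diff_distrib eq_diff_eq intro!: sum.cong)
  have "(\<Sum>x\<in>T. fun_scale (h x) (laplacian_row \<mu> x)) y
      = (\<Sum>x\<in>T. (if x = y then h x else 0)) - (\<Sum>x\<in>T. \<Sum>s\<in>S. \<mu> s * (if x = y - s then h x else 0))"
    by (simp only: sum_fun_apply summand sum_subtractf)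
  also have "\<dots> = (\<Sum>x\<in>T. (if x = y then h x else 0)) - (\<Sum>s\<in>S. \<mu> s * (\<Sum>x\<in>T. (if x = y - s then h x else 0)))"
    by (subst sum.swap) (simp add: sum_distrib_left)
  also have "\<dots> = h y - (\<Sum>s\<in>S. \<mu> s * h (y - s))"
    using assms(2) zero_outside by (auto intro!: sum.cong)
  finally show ?thesis by (simp add: S_def)
qed

lemma laplacian_rows_linearly_independent:
  fixes \<mu> :: "'a::group_add \<Rightarrow> real"
  assumes "infinite (UNIV :: 'a set)" and "finitely_supported_prob \<mu>" and "generating \<mu>"
    and "finite T" and "(\<Sum>x\<in>T. fun_scale (l x) (laplacian_row \<mu> x)) = 0"
  shows "\<forall>x\<in>T. l x = 0"
proof
  define h where "h x = (if x \<in> T then l x else 0)" for x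
  have "(\<Sum>x\<in>T. fun_scale (h x) (laplacian_row \<mu> x)) = 0"
    using assms(5) by (simp add: h_def)
  then have "h y = (\<Sum>s\<in>supp_meas \<mu>. \<mu> s * h (y - s))" for y
    using sum_scaled_laplacian_rows_apply[of \<mu> T h y] assms(2,4)
    by (simp add: finitely_supported_prob_def h_def)
  moreover have "finite {y. h y \<noteq> 0}"
    using assms(4) by (rule finite_subset[rotated]) (auto simp: h_def)
  ultimately have "h x = 0" for x
    using harmonic_finite_support_eq_0[OF assms(1-3)] by blast
  then show "l x = 0" if "x \<in> T" for x
    using that by (metis h_def)
qed

context module
begin

lemma family_independent_imp_inj:
  assumes "\<And>T l. finite T \<Longrightarrow> (\<Sum>x\<in>T. l x *s v x) = 0 \<Longrightarrow> \<forall>x\<in>T. l x = 0"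
  shows "inj v"
proof (rule injI, rule ccontr)
  fix a b assume "v a = v b" "a \<noteq> b"
  then have "(\<Sum>x\<in>{a, b}. (if x = a then 1 else -1) *s v x) = 0"
    by simp
  with assms[of "{a, b}" "\<lambda>x. if x = a then 1 else -1"] \<open>a \<noteq> b\<close> show False
    by simp
qed

lemma family_independent_imp_independent_range:
  assumes "\<And>T l. finite T \<Longrightarrow> (\<Sum>x\<in>T. l x *s v x) = 0 \<Longrightarrow> \<forall>x\<in>T. l x = 0"
  shows "independent (range v)"
proof
  assume "dependent (range v)"
  then obtain t u where t: "finite t" "t \<subseteq> range v" "(\<Sum>w\<in>t. u w *s w) = 0"
    and nonzero: "\<exists>w\<in>t. u w \<noteq> 0"
    unfolding dependent_explicit by blast
  obtain T where T: "t = v ` T" "inj_on v T"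
    using t(2) subset_image_inj by metis
  have "(\<Sum>x\<in>T. (u \<circ> v) x *s v x) = 0"
    using t(3) T by (simp add: sum.reindex)
  then have "\<forall>x\<in>T. (u \<circ> v) x = 0"
    using assms t(1) T finite_image_iff by blast
  then show False using nonzero T(1) by auto
qed

end

theorem proposition1p6:
  fixes \<mu> :: "'a::group_add \<Rightarrow> real"
  assumes "infinite (UNIV :: 'a set)"
    and "finitely_supported_prob \<mu>"
    and "generating \<mu>"
  shows "surj (laplacian \<mu>)"
proof -
  interpret fs: vector_space_pair fun_scale "scaleR :: real \<Rightarrow> real \<Rightarrow> real"
    using vector_space_fun_scale real_vector.vector_space_axioms by (simp add: vector_space_pair_def)
  let ?row = "laplacian_row \<mu>"
  have family: "\<And>T l. finite T \<Longrightarrow> (\<Sum>x\<in>T. fun_scale (l x) (?row x)) = 0 \<Longrightarrow> \<forall>x\<in>T. l x = 0"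
    by (rule laplacian_rows_linearly_independent[OF assms])
  have "inj ?row"
    by (rule fs.vs1.family_independent_imp_inj[OF family])
  have "fs.vs1.independent (range ?row)"
    by (rule fs.vs1.family_independent_imp_independent_range[OF family])
  have "\<exists>f. g = laplacian \<mu> f" for g
  proof -
    obtain \<phi> where lin: "Vector_Spaces.linear fun_scale scaleR \<phi>" and \<phi>: "\<And>x. \<phi> (?row x) = g x"
      using fs.linear_independent_extend[OF \<open>fs.vs1.independent (range ?row)\<close>, of "\<lambda>v. g (inv ?row v)"]
        \<open>inj ?row\<close> by auto
    have "laplacian \<mu> (\<lambda>y. \<phi> (indicator {y})) x = \<phi> (?row x)" for x
      by (simp add: laplacian_def laplacian_row_def fs.linear_diff[OF lin] fs.linear_sum[OF lin]
          fs.linear_scale[OF lin])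
    then show ?thesis using \<phi> by (intro exI[of _ "\<lambda>y. \<phi> (indicator {y})"]) auto
  qed
  then show ?thesis by (auto simp: surj_def)
qed

end
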